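(* For all integers $L\ge 0$, $p\ge 0$ and $n\ge p$, $$b_L(p,n+1)=\sum_{k=0}^{n-p}\binom{n}{k}\binom{n+1}{k}^{L}b_L(p,k),$$ with $b_L(p,0)=1$, $b_L(p,1)=\cdots=b_L(p,p)=0$ and $b_L(p,p+1)=1$. Consequently all $b_L(p,n)$ are nonnegative integers.
   Context: For an integer $L\ge 0$ let ${}_0F_L(z)=\sum_{n=0}^{\infty}\frac{z^n}{(n!)^{L+1}}$. For an integer $p\ge0$ define the numbers $b_L(p,n)$, $n\ge0$, by the formal power series identity $\exp\Big({}_0F_L(z)-\sum_{k=0}^{p}\frac{z^k}{(k!)^{L+1}}\Big)=\sum_{n=0}^{\infty}b_L(p,n)\frac{z^n}{(n!)^{L+1}}$. *)

theory Defs
  imports "HOL-Computational_Algebra.Formal_Power_Series"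
begin

text \<open>The formal power series  0F_L(z) - sum_{k=0}^{p} z^k/(k!)^(L+1),
  i.e. the tail of 0F_L starting at index p+1 (it has zero constant term).\<close>
definition tailF :: "nat \<Rightarrow> nat \<Rightarrow> real fps" where
  "tailF L p = Abs_fps (\<lambda>n. if n \<le> p then 0 else 1 / (fact n) ^ (L + 1))"

definition expTail :: "nat \<Rightarrow> nat \<Rightarrow> real fps" where
  "expTail L p = fps_exp 1 oo tailF L p"

definition bL :: "nat \<Rightarrow> nat \<Rightarrow> nat \<Rightarrow> real" where
  "bL L p n = fps_nth (expTail L p) n * (fact n) ^ (L + 1)"

end

theory Submission
  imports Defs
begin

unbundle fps_syntax

text \<open>Differentiating \<open>E = exp T\<close> gives \<open>E' = E T'\<close>, a convolution recurrence for the
  coefficients of \<open>E\<close>. Multiplied by \<open>((n+1)!)^(L+1) / (n+1)\<close>, the factorials in its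
  \<open>k\<close>-th term collapse to \<open>(n choose k) * ((n+1) choose k)^L\<close>, and only the terms with
  \<open>n + 1 - k > p\<close> survive because \<open>T\<close> vanishes up to degree \<open>p\<close>.\<close>

lemma fps_exp_compose_nth_Suc:
  fixes f :: "'a::field_char_0 fps"
  assumes "f $ 0 = 0"
  shows "of_nat (n + 1) * (fps_exp 1 oo f) $ (n + 1)
       = (\<Sum>i\<le>n. (fps_exp 1 oo f) $ i * (of_nat (n - i + 1) * f $ (n - i + 1)))"
proof -
  have "fps_deriv (fps_exp 1 oo f) = (fps_exp 1 oo f) * fps_deriv f"
    by (simp add: fps_compose_deriv assms)
  from arg_cong[OF this, of "\<lambda>g. g $ n"] show ?thesis
    by (simp only: fps_deriv_nth fps_mult_nth atLeast0AtMost)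
qed

lemma sum_in_Nats: "(\<And>i. i \<in> A \<Longrightarrow> f i \<in> \<nat>) \<Longrightarrow> sum f A \<in> \<nat>"
  by (induction A rule: infinite_finite_induct) auto

lemma fact_power_binomial_weight:
  assumes "i \<le> n"
  shows "fact (Suc n) ^ Suc L * real (Suc n - i) / (real (Suc n) * (fact i * fact (Suc n - i)) ^ Suc L)
       = real (n choose i) * real (Suc n choose i) ^ L"
proof -
  have "(Suc n - i) * (Suc n choose i) = Suc n * (n choose i)"
    using binomial_absorb_comp[of "Suc n" i] by simp
  then have absorb: "real (Suc n - i) * real (Suc n choose i) = real (Suc n) * real (n choose i)"
    by (metis of_nat_mult)
  have "fact (Suc n) ^ Suc L * real (Suc n - i) / (real (Suc n) * (fact i * fact (Suc n - i)) ^ Suc L)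
      = real (Suc n choose i) ^ Suc L * real (Suc n - i) / real (Suc n)"
    using assms by (simp add: binomial_fact power_divide)
  also have "\<dots> = real (Suc n choose i) ^ L * (real (Suc n - i) * real (Suc n choose i)) / real (Suc n)"
    by (simp add: mult_ac)
  also have "\<dots> = real (n choose i) * real (Suc n choose i) ^ L"
    by (simp add: absorb)
  finally show ?thesis .
qed

lemma tailF_nth: "tailF L p $ n = (if n \<le> p then 0 else 1 / fact n ^ Suc L)"
  by (simp add: tailF_def)

lemma expTail_nth: "expTail L p $ n = bL L p n / fact n ^ Suc L"
  by (simp add: bL_def)

lemma bL_0: "bL L p 0 = 1"
  by (simp add: bL_def expTail_def tailF_nth)

lemma bL_Suc:
  "bL L p (Suc n)
     = (\<Sum>i\<le>n. if i + p \<le> n then real (n choose i) * real (Suc n choose i) ^ L * bL L p i else 0)"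
proof -
  have convolution: "real (n + 1) * expTail L p $ (n + 1)
      = (\<Sum>i\<le>n. expTail L p $ i * (real (n - i + 1) * tailF L p $ (n - i + 1)))"
    unfolding expTail_def by (rule fps_exp_compose_nth_Suc) (simp add: tailF_nth)
  have "bL L p (Suc n) = fact (Suc n) ^ Suc L / real (Suc n) * (real (n + 1) * expTail L p $ (n + 1))"
    by (simp add: bL_def)
  also have "\<dots> = (\<Sum>i\<le>n. fact (Suc n) ^ Suc L / real (Suc n)
                     * (expTail L p $ i * (real (n - i + 1) * tailF L p $ (n - i + 1))))"
    by (simp only: convolution sum_distrib_left)
  also have "\<dots> = (\<Sum>i\<le>n. if i + p \<le> n
                     then real (n choose i) * real (Suc n choose i) ^ L * bL L p i else 0)"
  proof (rule sum.cong)
    fix i assume "i \<in> {..n}"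
    then have "i \<le> n"
      by simp
    then have index: "n - i + 1 = Suc n - i"
      by simp
    show "fact (Suc n) ^ Suc L / real (Suc n)
            * (expTail L p $ i * (real (n - i + 1) * tailF L p $ (n - i + 1)))
        = (if i + p \<le> n then real (n choose i) * real (Suc n choose i) ^ L * bL L p i else 0)"
    proof (cases "i + p \<le> n")
      case True
      have "fact (Suc n) ^ Suc L / real (Suc n)
              * (expTail L p $ i * (real (n - i + 1) * tailF L p $ (n - i + 1)))
          = bL L p i * (fact (Suc n) ^ Suc L * real (Suc n - i)
                          / (real (Suc n) * (fact i * fact (Suc n - i)) ^ Suc L))"
        unfolding index using True
        by (simp add: expTail_nth tailF_nth power_mult_distrib mult_ac
            del: fact_Suc of_nat_Suc of_nat_diff)
      also have "\<dots> = bL L p i * (real (n choose i) * real (Suc n choose i) ^ L)"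
        by (simp only: fact_power_binomial_weight[OF \<open>i \<le> n\<close>])
      finally show ?thesis
        using True by (simp add: mult_ac)
    next
      case False
      with \<open>i \<le> n\<close> show ?thesis
        by (simp add: index tailF_nth)
    qed
  qed simp
  finally show ?thesis .
qed

lemma bL_Suc_eq_0: "n < p \<Longrightarrow> bL L p (Suc n) = 0"
  by (simp add: bL_Suc)

lemma bL_Suc_recurrence:
  assumes "p \<le> n"
  shows "bL L p (Suc n) = (\<Sum>k = 0..n - p. real (n choose k) * real (Suc n choose k) ^ L * bL L p k)"
proof -
  have "{..n} \<inter> {i. i + p \<le> n} = {0..n - p}"
    using assms by auto
  then show ?thesis
    by (simp add: bL_Suc sum.If_cases)
qed

lemma bL_in_Nats: "bL L p n \<in> \<nat>"
proof (induction n rule: less_induct)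
  case (less n)
  show ?case
  proof (cases n)
    case 0
    then show ?thesis by (simp add: bL_0)
  next
    case (Suc m)
    then show ?thesis
      using less by (auto simp: bL_Suc intro!: sum_in_Nats simp flip: of_nat_power of_nat_mult)
  qed
qed

theorem mainTheorem7:
  fixes L p :: nat
  shows "(\<forall>n\<ge>p. bL L p (n + 1) =
            (\<Sum>k = 0..n - p. real (n choose k) * real ((n + 1) choose k) ^ L * bL L p k))
       \<and> bL L p 0 = 1
       \<and> (\<forall>n\<in>{1..p}. bL L p n = 0)
       \<and> bL L p (p + 1) = 1
       \<and> (\<forall>n. \<exists>m::nat. bL L p n = real m)"
proof (intro conjI allI impI ballI)
  fix n assume "n \<in> {1..p}"
  then obtain m where "n = Suc m" "m < p"
    by (cases n) auto
  then show "bL L p n = 0"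
    by (simp add: bL_Suc_eq_0)
next
  show "bL L p (p + 1) = 1"
    by (simp add: bL_Suc_recurrence bL_0)
next
  fix n
  show "\<exists>m::nat. bL L p n = real m"
    using bL_in_Nats[of L p n] by (auto elim: Nats_cases)
qed (simp_all add: bL_Suc_recurrence bL_0)

end
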